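(* Let $J\subseteq\mathbb R$ be an open interval, $A:J\to\mathbb R$ of class $C^3$, and $x_0\in J$ with $A''(x_0)\neq0$; let $\kappa_0=A''(x_0)/s(x_0)^3$. If $\tilde\epsilon>0$ is sufficiently small, then there is $\tilde\delta>0$ with $\tilde I=(x_0-\tilde\delta,x_0+\tilde\delta)\subset J$ (namely the $\delta$ furnished by the following local statement applied with $\epsilon=\tilde\epsilon$: for every three-tuple $\mathbf z$ of distinct points of $\Gamma(\tilde I)=\{x+iA(x):x\in\tilde I\}$ one has $|c^2(\mathbf z)-\kappa_0^2|<\tilde\epsilon$, $|\mathtt S[\mathrm{Re}K_\Gamma](\mathbf z)-\frac32c^2(\mathbf z)|<\tilde\epsilon$ and $|\mathtt S[\mathrm{Im}K_\Gamma](\mathbf z)+\frac12c^2(\mathbf z)|<\tilde\epsilon$) such that for every three-tuple $\mathbf z$ of non-collinear points in $\Gamma(\tilde I)^3$, $$\Bigl|\frac{\mathtt S[\mathrm{Re}K_\Gamma](\mathbf z)}{c^2(\mathbf z)}-\frac32\Bigr|<\frac{\tilde\epsilon}{\kappa_0^2-\tilde\epsilon},\qquad \Bigl|\frac{\mathtt S[\mathrm{Im}K_\Gamma](\mathbf z)}{c^2(\mathbf z)}+\frac12\Bigr|<\frac{\tilde\epsilon}{\kappa_0^2-\tilde\epsilon}.$$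
   Context: $\Gamma=\{x+iA(x): x\in J\}$, $s(x)=\sqrt{1+(A'(x))^2}$. The kernel (normalizing factor $1/(2\pi)$ omitted) is $K_\Gamma(w,z)=\dfrac{A'(x)-i}{s(x)\,[\,x-y+i(A(x)-A(y))\,]}$ for $w=x+iA(x)$, $z=y+iA(y)$, $x\neq y$. For $K$ defined off the diagonal and distinct $z_1,z_2,z_3$, $\mathtt S[K](\mathbf z)=\sum_{\sigma\in S_3}K(z_{\sigma(1)},z_{\sigma(2)})\overline{K(z_{\sigma(1)},z_{\sigma(3)})}$. The Menger curvature $c(\mathbf z)$ is $0$ for collinear points and otherwise the reciprocal of the radius of the circle through the three points. *)

theory Defs
  imports "HOL-Analysis.Analysis"
begin

definition C3_on :: "real set \<Rightarrow> (real \<Rightarrow> real) \<Rightarrow> bool" where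
  "C3_on J A \<longleftrightarrow>
     (\<forall>x\<in>J. (A has_real_derivative deriv A x) (at x)
        \<and> (deriv A has_real_derivative deriv (deriv A) x) (at x)
        \<and> (deriv (deriv A) has_real_derivative deriv (deriv (deriv A)) x) (at x))
     \<and> continuous_on J (deriv (deriv (deriv A)))"

definition arclen_factor :: "(real \<Rightarrow> real) \<Rightarrow> real \<Rightarrow> real" where
  "arclen_factor A x = sqrt (1 + (deriv A x)^2)"

definition graph_curve :: "(real \<Rightarrow> real) \<Rightarrow> real set \<Rightarrow> complex set" where
  "graph_curve A I = (\<lambda>x. Complex x (A x)) ` I"

text \<open>The kernel K_Gamma(w,z) (without 1/(2 pi)), with w = x + iA(x), z = y + iA(y).\<close>
definition kernel :: "(real \<Rightarrow> real) \<Rightarrow> complex \<Rightarrow> complex \<Rightarrow> complex" where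
  "kernel A w z =
     (let x = Re w; y = Re z in
      (complex_of_real (deriv A x) - \<i>) /
      (complex_of_real (arclen_factor A x) *
        (complex_of_real (x - y) + \<i> * complex_of_real (A x - A y))))"

definition triple :: "complex \<Rightarrow> complex \<Rightarrow> complex \<Rightarrow> nat \<Rightarrow> complex" where
  "triple z1 z2 z3 = (\<lambda>i. if i = 0 then z1 else if i = 1 then z2 else z3)"

definition symS :: "(complex \<Rightarrow> complex \<Rightarrow> complex) \<Rightarrow> complex \<Rightarrow> complex \<Rightarrow> complex \<Rightarrow> complex" where
  "symS K z1 z2 z3 =
     (let z = triple z1 z2 z3 in
      \<Sum>\<sigma> \<in> {\<sigma>. \<sigma> permutes {0,1,2::nat}}.
        K (z (\<sigma> 0)) (z (\<sigma> 1)) * cnj (K (z (\<sigma> 0)) (z (\<sigma> 2))))"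

definition menger :: "complex \<Rightarrow> complex \<Rightarrow> complex \<Rightarrow> real" where
  "menger z1 z2 z3 =
     (if collinear {z1, z2, z3} then 0
      else 1 / (THE r. \<exists>p. dist p z1 = r \<and> dist p z2 = r \<and> dist p z3 = r))"

definition ReK :: "(real \<Rightarrow> real) \<Rightarrow> complex \<Rightarrow> complex \<Rightarrow> complex" where
  "ReK A w z = complex_of_real (Re (kernel A w z))"

definition ImK :: "(real \<Rightarrow> real) \<Rightarrow> complex \<Rightarrow> complex \<Rightarrow> complex" where
  "ImK A w z = complex_of_real (Im (kernel A w z))"

end

theory Submission
  imports Defs
begin

(*
  On the graph z(x) = x + i A(x) the kernel satisfies
    K(x,y) * cnj K(x,w) = 1 / ((z(x) - z(y)) * cnj (z(x) - z(w)))  and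
    K(x,y) * K(x,w) = - T(x) / ((z(x) - z(y)) * (z(x) - z(w))),
  where T = (1 + i A')^2 / (1 + A'^2) is the squared unit tangent. As Re p Re q and Im p Im q are
  (Re (p cnj q) +- Re (p q)) / 2, the symmetrisations of Re K and Im K are (P +- Re Q) / 2, where
  P = Re S[K] equals c^2 by Melnikov's identity and Q, the symmetrisation without conjugation, is
  -2 times the second divided difference of T with respect to z. Both c^2 and Q are rational
  expressions in divided differences of A and T along the x-axis; by the mean value theorem these
  tend to the derivatives at x0 as three distinct points approach x0, so c^2 -> kappa0^2 and
  Re Q -> 2 kappa0^2. Hence S[Re K] - 3/2 c^2 = (Re Q - 2 c^2) / 2 = - (S[Im K] + 1/2 c^2) tends
  to 0, and dividing by c^2 > kappa0^2 - eps gives the ratio bounds.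
*)

section \<open>Divided differences\<close>

lemma newton_eq_lagrange:
  fixes x y z u v w :: "'a::field"
  assumes "x \<noteq> y" "x \<noteq> z" "y \<noteq> z"
  shows "((u - v) / (x - y) - (v - w) / (y - z)) / (x - z)
    = u / ((x - y) * (x - z)) + v / ((y - x) * (y - z)) + w / ((z - x) * (z - y))"
  using assms by (simp add: divide_simps) (simp add: algebra_simps)

definition divdiff :: "(real \<Rightarrow> 'a::real_field) \<Rightarrow> real \<Rightarrow> real \<Rightarrow> 'a" where
  "divdiff h a b = (h a - h b) / of_real (a - b)"

definition divdiff2 :: "(real \<Rightarrow> 'a::real_field) \<Rightarrow> real \<Rightarrow> real \<Rightarrow> real \<Rightarrow> 'a" where
  "divdiff2 h a b c = (divdiff h a b - divdiff h b c) / of_real (a - c)"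

lemma divdiff_commute: "divdiff h a b = divdiff h b a"
  unfolding divdiff_def by (metis minus_diff_eq of_real_minus minus_divide_divide)

lemma divdiff2_lagrange:
  assumes "a \<noteq> b" "a \<noteq> c" "b \<noteq> c"
  shows "divdiff2 h a b c = h a / of_real ((a - b) * (a - c)) + h b / of_real ((b - a) * (b - c))
    + h c / of_real ((c - a) * (c - b))"
  using newton_eq_lagrange [of "of_real a" "of_real b" "of_real c" "h a" "h b" "h c"] assms
  unfolding divdiff2_def divdiff_def by simp

text \<open>The left-hand side is the second divided difference of \<open>F \<circ> g\<inverse>\<close> at \<open>g a, g b, g c\<close>.\<close>

lemma divdiff2_reparam:
  fixes F g :: "real \<Rightarrow> 'a::real_field"
  assumes "a \<noteq> b" "a \<noteq> c" "b \<noteq> c" "g a \<noteq> g b" "g a \<noteq> g c" "g b \<noteq> g c"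
  shows "F a / ((g a - g b) * (g a - g c)) + F b / ((g b - g a) * (g b - g c))
      + F c / ((g c - g a) * (g c - g b))
    = (divdiff2 F a b c / divdiff g a b
        - divdiff F b c * divdiff2 g a b c / (divdiff g a b * divdiff g b c)) / divdiff g a c"
proof -
  define p q where "p = (of_real (a - b) :: 'a)" and "q = (of_real (b - c) :: 'a)"
  have pq: "of_real (a - c) = p + q" unfolding p_def q_def by (simp flip: of_real_add)
  have "p \<noteq> 0" "q \<noteq> 0" "p + q \<noteq> 0" using assms unfolding p_def q_def pq [symmetric] by auto
  then have "(divdiff2 F a b c / divdiff g a b
        - divdiff F b c * divdiff2 g a b c / (divdiff g a b * divdiff g b c)) / divdiff g a c
     = ((F a - F b) / (g a - g b) - (F b - F c) / (g b - g c)) / (g a - g c)"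
    using assms unfolding divdiff2_def divdiff_def pq p_def [symmetric] q_def [symmetric]
    by (simp add: divide_simps) (simp add: algebra_simps)
  then show ?thesis using newton_eq_lagrange [OF assms(4-6)] by simp
qed

lemma divdiff_Complex:
  "divdiff (\<lambda>x. Complex (f x) (g x)) a b = Complex (divdiff f a b) (divdiff g a b)"
  unfolding divdiff_def by (simp add: complex_eq_iff Re_divide_of_real Im_divide_of_real)

lemma divdiff2_Complex:
  "divdiff2 (\<lambda>x. Complex (f x) (g x)) a b c = Complex (divdiff2 f a b c) (divdiff2 g a b c)"
  unfolding divdiff2_def divdiff_Complex by (simp add: complex_eq_iff Re_divide_of_real Im_divide_of_real)

lemma divdiff_mean_value:
  fixes h :: "real \<Rightarrow> real"
  assumes "a \<noteq> b" "is_interval S" "a \<in> S" "b \<in> S"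
    and "\<And>x. x \<in> S \<Longrightarrow> (h has_real_derivative h' x) (at x)"
  shows "\<exists>\<eta>\<in>S. divdiff h a b = h' \<eta>"
  using assms
proof (induction a b rule: linorder_wlog)
  case (le a b)
  have between: "x \<in> S" if "a \<le> x" "x \<le> b" for x
    using le that unfolding is_interval_1 by blast
  obtain \<eta> where "a < \<eta>" "\<eta> < b" "h b - h a = (b - a) * h' \<eta>"
    using MVT2 [of a b h h'] le between by force
  then show ?case
    using le between [of \<eta>] unfolding divdiff_def by (intro bexI [of _ \<eta>]) (auto simp: field_simps)
next
  case (sym a b)
  then show ?case by (simp add: divdiff_commute [of h a b])
qed

lemma divdiff2_mean_value_ordered:
  fixes h :: "real \<Rightarrow> real"
  assumes "a < b" "b < c"
    and h': "\<And>x. a \<le> x \<Longrightarrow> x \<le> c \<Longrightarrow> (h has_real_derivative h' x) (at x)"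
    and h'': "\<And>x. a \<le> x \<Longrightarrow> x \<le> c \<Longrightarrow> (h' has_real_derivative h'' x) (at x)"
  shows "\<exists>\<xi>. a < \<xi> \<and> \<xi> < c \<and> divdiff2 h a b c = h'' \<xi> / 2"
proof -
  \<comment> \<open>\<open>\<phi>\<close> is \<open>h\<close> minus its quadratic interpolant at \<open>a, b, c\<close>: Rolle twice for \<open>\<phi>\<close>, then once for \<open>\<phi>'\<close>.\<close>
  define L D where "L = divdiff h a b" and "D = divdiff2 h a b c"
  define \<phi> where "\<phi> t = h t - h a - L * (t - a) - D * ((t - a) * (t - b))" for t
  define \<phi>' where "\<phi>' t = h' t - L - D * (2 * t - a - b)" for t
  have \<phi>_deriv: "(\<phi> has_real_derivative \<phi>' t) (at t)" if "a \<le> t" "t \<le> c" for t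
    unfolding \<phi>_def \<phi>'_def
    by (rule derivative_eq_intros h' [OF that] refl | simp add: algebra_simps)+
  have \<phi>'_deriv: "(\<phi>' has_real_derivative h'' t - 2 * D) (at t)" if "a \<le> t" "t \<le> c" for t
    unfolding \<phi>'_def by (rule derivative_eq_intros h'' [OF that] refl | simp)+
  have "\<phi> a = 0" "\<phi> b = 0" "\<phi> c = 0"
    using assms unfolding \<phi>_def L_def D_def divdiff2_def divdiff_def
    by (simp_all add: divide_simps) (simp_all add: algebra_simps)
  obtain \<eta>1 where \<eta>1: "a < \<eta>1" "\<eta>1 < b" "\<phi>' \<eta>1 = 0"
    using MVT2 [of a b \<phi> \<phi>'] \<phi>_deriv \<open>\<phi> a = 0\<close> \<open>\<phi> b = 0\<close> assms by force
  obtain \<eta>2 where \<eta>2: "b < \<eta>2" "\<eta>2 < c" "\<phi>' \<eta>2 = 0"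
    using MVT2 [of b c \<phi> \<phi>'] \<phi>_deriv \<open>\<phi> b = 0\<close> \<open>\<phi> c = 0\<close> assms by force
  obtain \<xi> where "\<eta>1 < \<xi>" "\<xi> < \<eta>2" "\<phi>' \<eta>2 - \<phi>' \<eta>1 = (\<eta>2 - \<eta>1) * (h'' \<xi> - 2 * D)"
    using MVT2 [of \<eta>1 \<eta>2 \<phi>' "\<lambda>t. h'' t - 2 * D"] \<phi>'_deriv \<eta>1 \<eta>2 by force
  then show ?thesis
    using \<eta>1 \<eta>2 unfolding D_def by (intro exI [of _ \<xi>]) auto
qed

lemma divdiff2_mean_value:
  fixes h :: "real \<Rightarrow> real"
  assumes "a \<noteq> b" "a \<noteq> c" "b \<noteq> c" "is_interval S" "a \<in> S" "b \<in> S" "c \<in> S"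
    and "\<And>x. x \<in> S \<Longrightarrow> (h has_real_derivative h' x) (at x)"
    and "\<And>x. x \<in> S \<Longrightarrow> (h' has_real_derivative h'' x) (at x)"
  shows "\<exists>\<xi>\<in>S. divdiff2 h a b c = h'' \<xi> / 2"
proof -
  have ordered: "\<exists>\<xi>\<in>S. divdiff2 h x y z = h'' \<xi> / 2"
    if "x < y" "y < z" "x \<in> S" "z \<in> S" for x y z
  proof -
    have between: "t \<in> S" if "x \<le> t" "t \<le> z" for t
      using assms(4) \<open>x \<in> S\<close> \<open>z \<in> S\<close> that unfolding is_interval_1 by blast
    then show ?thesis
      using divdiff2_mean_value_ordered [OF \<open>x < y\<close> \<open>y < z\<close>, of h h' h''] assms(8,9)
      by (metis less_eq_real_def)
  qed
  have sym: "divdiff2 h x y z = divdiff2 h a b c"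
    if "(x, y, z) \<in> {(a, b, c), (a, c, b), (b, a, c), (b, c, a), (c, a, b), (c, b, a)}" for x y z
    using that assms(1-3) by (auto simp: divdiff2_lagrange ac_simps)
  consider "a < b" "b < c" | "a < c" "c < b" | "b < a" "a < c" | "b < c" "c < a"
    | "c < a" "a < b" | "c < b" "b < a"
    using assms(1-3) by linarith
  then show ?thesis
  proof cases
    case 1 with ordered [of a b c] sym [of a b c] assms(5-7) show ?thesis by auto
  next
    case 2 with ordered [of a c b] sym [of a c b] assms(5-7) show ?thesis by auto
  next
    case 3 with ordered [of b a c] sym [of b a c] assms(5-7) show ?thesis by auto
  next
    case 4 with ordered [of b c a] sym [of b c a] assms(5-7) show ?thesis by auto
  next
    case 5 with ordered [of c a b] sym [of c a b] assms(5-7) show ?thesis by auto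
  next
    case 6 with ordered [of c b a] sym [of c b a] assms(5-7) show ?thesis by auto
  qed
qed

lemma tendsto_mean_value_form:
  fixes q :: "'b \<Rightarrow> real"
  assumes "isCont g x0" "open J" "x0 \<in> J"
    and mv: "\<And>r. 0 < r \<Longrightarrow> ball x0 r \<subseteq> J \<Longrightarrow> eventually (\<lambda>p. \<exists>\<xi>\<in>ball x0 r. q p = g \<xi>) F"
  shows "(q \<longlongrightarrow> g x0) F"
proof (rule tendstoI)
  fix e :: real assume "0 < e"
  obtain r1 where "0 < r1" and r1: "\<And>\<xi>. dist \<xi> x0 < r1 \<Longrightarrow> dist (g \<xi>) (g x0) < e"
    using assms(1) \<open>0 < e\<close> unfolding continuous_at_eps_delta by blast
  obtain r2 where "0 < r2" "ball x0 r2 \<subseteq> J"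
    using assms(2,3) open_contains_ball by blast
  then have "eventually (\<lambda>p. \<exists>\<xi>\<in>ball x0 (min r1 r2). q p = g \<xi>) F"
    using \<open>0 < r1\<close> by (intro mv) auto
  then show "eventually (\<lambda>p. dist (q p) (g x0) < e) F"
    by eventually_elim (auto simp: dist_commute intro: r1)
qed

lemma tendsto_divdiff:
  fixes h :: "real \<Rightarrow> real"
  assumes "open J" "x0 \<in> J"
    and h': "\<And>x. x \<in> J \<Longrightarrow> (h has_real_derivative h' x) (at x)" and "isCont h' x0"
    and "(fa \<longlongrightarrow> x0) F" "(fb \<longlongrightarrow> x0) F" "eventually (\<lambda>p. fa p \<noteq> fb p) F"
  shows "((\<lambda>p. divdiff h (fa p) (fb p)) \<longlongrightarrow> h' x0) F"
proof (rule tendsto_mean_value_form [OF assms(4,1,2)])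
  fix r :: real assume "0 < r" "ball x0 r \<subseteq> J"
  have "eventually (\<lambda>p. fa p \<in> ball x0 r \<and> fb p \<in> ball x0 r \<and> fa p \<noteq> fb p) F"
    using tendstoD [OF assms(5) \<open>0 < r\<close>] tendstoD [OF assms(6) \<open>0 < r\<close>] assms(7)
    by eventually_elim (auto simp: dist_commute)
  then show "eventually (\<lambda>p. \<exists>\<xi>\<in>ball x0 r. divdiff h (fa p) (fb p) = h' \<xi>) F"
    by eventually_elim
      (use divdiff_mean_value [OF _ is_interval_ball_real] h' \<open>ball x0 r \<subseteq> J\<close> in blast)
qed

lemma tendsto_divdiff2:
  fixes h :: "real \<Rightarrow> real"
  assumes "open J" "x0 \<in> J"
    and h': "\<And>x. x \<in> J \<Longrightarrow> (h has_real_derivative h' x) (at x)"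
    and h'': "\<And>x. x \<in> J \<Longrightarrow> (h' has_real_derivative h'' x) (at x)" and "isCont h'' x0"
    and "(fa \<longlongrightarrow> x0) F" "(fb \<longlongrightarrow> x0) F" "(fc \<longlongrightarrow> x0) F"
    and "eventually (\<lambda>p. fa p \<noteq> fb p \<and> fa p \<noteq> fc p \<and> fb p \<noteq> fc p) F"
  shows "((\<lambda>p. divdiff2 h (fa p) (fb p) (fc p)) \<longlongrightarrow> h'' x0 / 2) F"
proof (rule tendsto_mean_value_form [where g = "\<lambda>x. h'' x / 2", OF _ assms(1,2)])
  show "isCont (\<lambda>x. h'' x / 2) x0" using assms(5) by (auto intro!: continuous_intros)
next
  fix r :: real assume "0 < r" "ball x0 r \<subseteq> J"
  have "eventually (\<lambda>p. fa p \<in> ball x0 r \<and> fb p \<in> ball x0 r \<and> fc p \<in> ball x0 r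
      \<and> fa p \<noteq> fb p \<and> fa p \<noteq> fc p \<and> fb p \<noteq> fc p) F"
    using tendstoD [OF assms(6) \<open>0 < r\<close>] tendstoD [OF assms(7) \<open>0 < r\<close>]
      tendstoD [OF assms(8) \<open>0 < r\<close>] assms(9)
    by eventually_elim (auto simp: dist_commute)
  then show "eventually (\<lambda>p. \<exists>\<xi>\<in>ball x0 r. divdiff2 h (fa p) (fb p) (fc p) = h'' \<xi> / 2) F"
    by eventually_elim
      (use divdiff2_mean_value [OF _ _ _ is_interval_ball_real] h' h'' \<open>ball x0 r \<subseteq> J\<close> in blast)
qed

definition triples_at :: "real \<Rightarrow> (real \<times> real \<times> real) filter" where
  "triples_at x0 = at (x0, x0, x0) within {(a, b, c). a \<noteq> b \<and> a \<noteq> c \<and> b \<noteq> c}"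

lemma tendsto_triples_at:
  "(fst \<longlongrightarrow> x0) (triples_at x0)"
  "((\<lambda>p. fst (snd p)) \<longlongrightarrow> x0) (triples_at x0)"
  "((\<lambda>p. snd (snd p)) \<longlongrightarrow> x0) (triples_at x0)"
proof -
  have ident: "((\<lambda>p. p) \<longlongrightarrow> (x0, x0, x0)) (triples_at x0)"
    unfolding triples_at_def by (rule tendsto_ident_at)
  show "(fst \<longlongrightarrow> x0) (triples_at x0)"
    "((\<lambda>p. fst (snd p)) \<longlongrightarrow> x0) (triples_at x0)"
    "((\<lambda>p. snd (snd p)) \<longlongrightarrow> x0) (triples_at x0)"
    using tendsto_fst [OF ident] tendsto_fst [OF tendsto_snd [OF ident]] tendsto_snd [OF tendsto_snd [OF ident]]
    by simp_all
qed

lemma eventually_triples_at_distinct: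
  "eventually (\<lambda>p. fst p \<noteq> fst (snd p) \<and> fst p \<noteq> snd (snd p) \<and> fst (snd p) \<noteq> snd (snd p)) (triples_at x0)"
  unfolding triples_at_def eventually_at_filter by (auto intro: always_eventually)

lemma dist_triple_le:
  fixes a b c x y z :: real
  shows "dist (a, b, c) (x, y, z) \<le> \<bar>a - x\<bar> + \<bar>b - y\<bar> + \<bar>c - z\<bar>"
proof -
  have "dist (a, b, c) (x, y, z) \<le> dist a x + dist (b, c) (y, z)"
    unfolding dist_Pair_Pair [of a "(b, c)"] by (rule sqrt_sum_squares_le_sum) simp_all
  also have "dist (b, c) (y, z) \<le> dist b y + dist c z"
    unfolding dist_Pair_Pair by (rule sqrt_sum_squares_le_sum) simp_all
  finally show ?thesis by (simp add: dist_real_def)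
qed

lemma eventually_triples_atE:
  assumes "eventually P (triples_at x0)"
  obtains \<delta> where "0 < \<delta>"
    "\<And>a b c. a \<noteq> b \<Longrightarrow> a \<noteq> c \<Longrightarrow> b \<noteq> c \<Longrightarrow> \<bar>a - x0\<bar> < \<delta> \<Longrightarrow> \<bar>b - x0\<bar> < \<delta> \<Longrightarrow> \<bar>c - x0\<bar> < \<delta>
      \<Longrightarrow> P (a, b, c)"
proof -
  obtain d where "0 < d" and d: "\<And>p. p \<in> {(a, b, c). a \<noteq> b \<and> a \<noteq> c \<and> b \<noteq> c} \<Longrightarrow> p \<noteq> (x0, x0, x0)
      \<Longrightarrow> dist p (x0, x0, x0) < d \<Longrightarrow> P p"
    using assms unfolding triples_at_def eventually_at by blast
  show ?thesis
  proof (rule that [of "d / 3"])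
    fix a b c assume "a \<noteq> b" "a \<noteq> c" "b \<noteq> c" "\<bar>a - x0\<bar> < d / 3" "\<bar>b - x0\<bar> < d / 3" "\<bar>c - x0\<bar> < d / 3"
    moreover from this have "dist (a, b, c) (x0, x0, x0) < d"
      using dist_triple_le [of a b c x0 x0 x0] by linarith
    ultimately show "P (a, b, c)" by (intro d) auto
  qed (use \<open>0 < d\<close> in simp)
qed

lemma tendsto_divdiff_triples:
  fixes h :: "real \<Rightarrow> real"
  assumes "open J" "x0 \<in> J"
    and "\<And>x. x \<in> J \<Longrightarrow> (h has_real_derivative h' x) (at x)" and "isCont h' x0"
  shows "((\<lambda>(a, b, c). divdiff h a b) \<longlongrightarrow> h' x0) (triples_at x0)"
    and "((\<lambda>(a, b, c). divdiff h a c) \<longlongrightarrow> h' x0) (triples_at x0)"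
    and "((\<lambda>(a, b, c). divdiff h b c) \<longlongrightarrow> h' x0) (triples_at x0)"
  using eventually_triples_at_distinct [of x0]
  unfolding case_prod_unfold
  by (auto intro!: tendsto_divdiff [OF assms] tendsto_triples_at elim: eventually_mono)

lemma tendsto_divdiff2_triples:
  fixes h :: "real \<Rightarrow> real"
  assumes "open J" "x0 \<in> J"
    and "\<And>x. x \<in> J \<Longrightarrow> (h has_real_derivative h' x) (at x)"
    and "\<And>x. x \<in> J \<Longrightarrow> (h' has_real_derivative h'' x) (at x)" and "isCont h'' x0"
  shows "((\<lambda>(a, b, c). divdiff2 h a b c) \<longlongrightarrow> h'' x0 / 2) (triples_at x0)"
  using eventually_triples_at_distinct [of x0]
  unfolding case_prod_unfold
  by (auto intro!: tendsto_divdiff2 [OF assms] tendsto_triples_at)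

lemma one_plus_square_pos: "0 < 1 + (t::real)\<^sup>2"
  by (simp add: add_pos_nonneg)

lemma has_real_derivative_divide_one_plus_square_power:
  assumes "(P has_real_derivative P') (at t)"
  shows "((\<lambda>t. P t / (1 + t\<^sup>2) ^ n) has_real_derivative
    (P' * (1 + t\<^sup>2) - 2 * real n * t * P t) / (1 + t\<^sup>2) ^ Suc n) (at t)"
proof -
  define w where "w = 1 + t\<^sup>2"
  have "w \<noteq> 0" using one_plus_square_pos [of t] unfolding w_def by simp
  have "((\<lambda>t. P t / (1 + t\<^sup>2) ^ n) has_real_derivative
    (P' * w ^ n - P t * (real n * w ^ (n - 1) * (2 * t))) / (w ^ n * w ^ n)) (at t)"
    unfolding w_def using one_plus_square_pos [of t]
    by (auto intro!: derivative_eq_intros assms)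
  moreover have "(P' * w ^ n - P t * (real n * w ^ (n - 1) * (2 * t))) / (w ^ n * w ^ n)
    = (P' * w - 2 * real n * t * P t) / w ^ Suc n"
    using \<open>w \<noteq> 0\<close> by (cases n) (simp_all add: field_simps)
  ultimately show ?thesis unfolding w_def by simp
qed

text \<open>For a slope \<open>t = tan \<theta>\<close> these are \<open>cos 2\<theta>\<close> and \<open>sin 2\<theta>\<close>.\<close>

definition cos2_slope :: "real \<Rightarrow> real" where
  "cos2_slope t = (1 - t\<^sup>2) / (1 + t\<^sup>2)"

definition sin2_slope :: "real \<Rightarrow> real" where
  "sin2_slope t = 2 * t / (1 + t\<^sup>2)"

lemma cos2_slope_deriv: "(cos2_slope has_real_derivative - 4 * t / (1 + t\<^sup>2)\<^sup>2) (at t)"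
proof -
  have "((\<lambda>t. (1 - t\<^sup>2) / (1 + t\<^sup>2) ^ 1) has_real_derivative
      (- 2 * t * (1 + t\<^sup>2) - 2 * real 1 * t * (1 - t\<^sup>2)) / (1 + t\<^sup>2) ^ Suc 1) (at t)"
    by (intro has_real_derivative_divide_one_plus_square_power derivative_eq_intros) auto
  then show ?thesis
    unfolding cos2_slope_def by (simp add: algebra_simps power2_eq_square)
qed

lemma cos2_slope_deriv2:
  "((\<lambda>t. - 4 * t / (1 + t\<^sup>2)\<^sup>2) has_real_derivative (12 * t\<^sup>2 - 4) / (1 + t\<^sup>2) ^ 3) (at t)"
proof -
  have "((\<lambda>t. - 4 * t / (1 + t\<^sup>2) ^ 2) has_real_derivative
      (- 4 * (1 + t\<^sup>2) - 2 * real 2 * t * (- 4 * t)) / (1 + t\<^sup>2) ^ Suc 2) (at t)"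
    by (intro has_real_derivative_divide_one_plus_square_power derivative_eq_intros) auto
  then show ?thesis by (simp add: algebra_simps power2_eq_square)
qed

lemma sin2_slope_deriv: "(sin2_slope has_real_derivative 2 * (1 - t\<^sup>2) / (1 + t\<^sup>2)\<^sup>2) (at t)"
proof -
  have "((\<lambda>t. 2 * t / (1 + t\<^sup>2) ^ 1) has_real_derivative
      (2 * (1 + t\<^sup>2) - 2 * real 1 * t * (2 * t)) / (1 + t\<^sup>2) ^ Suc 1) (at t)"
    by (intro has_real_derivative_divide_one_plus_square_power derivative_eq_intros) auto
  then show ?thesis
    unfolding sin2_slope_def by (simp add: algebra_simps power2_eq_square)
qed

lemma sin2_slope_deriv2:
  "((\<lambda>t. 2 * (1 - t\<^sup>2) / (1 + t\<^sup>2)\<^sup>2) has_real_derivative (4 * t ^ 3 - 12 * t) / (1 + t\<^sup>2) ^ 3) (at t)"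
proof -
  have "((\<lambda>t. 2 * (1 - t\<^sup>2) / (1 + t\<^sup>2) ^ 2) has_real_derivative
      (- 4 * t * (1 + t\<^sup>2) - 2 * real 2 * t * (2 * (1 - t\<^sup>2))) / (1 + t\<^sup>2) ^ Suc 2) (at t)"
    by (intro has_real_derivative_divide_one_plus_square_power derivative_eq_intros) auto
  then show ?thesis by (simp add: algebra_simps power2_eq_square power3_eq_cube)
qed

text \<open>The derivatives of \<open>cos2_slope t + \<i> sin2_slope t = (1 + \<i> t) / (1 - \<i> t)\<close> in closed form.\<close>

lemma slope_derivs_complex:
  "Complex (- 4 * t / (1 + t\<^sup>2)\<^sup>2) (2 * (1 - t\<^sup>2) / (1 + t\<^sup>2)\<^sup>2) = 2 * \<i> / (cnj (Complex 1 t))\<^sup>2"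
  "Complex ((12 * t\<^sup>2 - 4) / (1 + t\<^sup>2) ^ 3) ((4 * t ^ 3 - 12 * t) / (1 + t\<^sup>2) ^ 3) = - 4 / (cnj (Complex 1 t)) ^ 3"
proof -
  have sq: "(cnj (Complex 1 t))\<^sup>2 = Complex (1 - t\<^sup>2) (- 2 * t)"
    by (simp add: complex_eq_iff power2_eq_square)
  have cube: "(cnj (Complex 1 t)) ^ 3 = Complex (1 - 3 * t\<^sup>2) (t ^ 3 - 3 * t)"
    by (simp add: complex_eq_iff power3_eq_cube power2_eq_square algebra_simps)
  have "cnj (Complex 1 t) \<noteq> 0" by (simp add: complex_eq_iff)
  moreover have "Complex (- 4 * t / (1 + t\<^sup>2)\<^sup>2) (2 * (1 - t\<^sup>2) / (1 + t\<^sup>2)\<^sup>2) * (cnj (Complex 1 t))\<^sup>2 = 2 * \<i>"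
    unfolding sq using one_plus_square_pos [of t]
    by (simp add: complex_eq_iff divide_simps) (simp add: power2_eq_square algebra_simps)
  ultimately show "Complex (- 4 * t / (1 + t\<^sup>2)\<^sup>2) (2 * (1 - t\<^sup>2) / (1 + t\<^sup>2)\<^sup>2) = 2 * \<i> / (cnj (Complex 1 t))\<^sup>2"
    by (simp add: nonzero_eq_divide_eq)
  have "Complex ((12 * t\<^sup>2 - 4) / (1 + t\<^sup>2) ^ 3) ((4 * t ^ 3 - 12 * t) / (1 + t\<^sup>2) ^ 3)
      * (cnj (Complex 1 t)) ^ 3 = - 4"
    unfolding cube using one_plus_square_pos [of t]
    by (simp add: complex_eq_iff divide_simps) (simp add: power2_eq_square power3_eq_cube algebra_simps)
  with \<open>cnj (Complex 1 t) \<noteq> 0\<close>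
  show "Complex ((12 * t\<^sup>2 - 4) / (1 + t\<^sup>2) ^ 3) ((4 * t ^ 3 - 12 * t) / (1 + t\<^sup>2) ^ 3) = - 4 / (cnj (Complex 1 t)) ^ 3"
    by (subst nonzero_eq_divide_eq) simp_all
qed

lemma C3_onD:
  assumes "C3_on J A" "x \<in> J"
  shows "(A has_real_derivative deriv A x) (at x)"
    and "(deriv A has_real_derivative deriv (deriv A) x) (at x)"
    and "(deriv (deriv A) has_real_derivative deriv (deriv (deriv A)) x) (at x)"
    and "open J \<Longrightarrow> isCont (deriv (deriv (deriv A))) x"
  using assms continuous_on_eq_continuous_at unfolding C3_on_def by blast+

lemma C3_on_compose_deriv:
  fixes u u' u'' :: "real \<Rightarrow> real"
  assumes "open J" "C3_on J A" "x \<in> J"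
    and u: "\<And>t. (u has_real_derivative u' t) (at t)" "\<And>t. (u' has_real_derivative u'' t) (at t)"
      "\<And>t. isCont u'' t"
  shows "((\<lambda>x. u (deriv A x)) has_real_derivative u' (deriv A x) * deriv (deriv A) x) (at x)"
    and "((\<lambda>x. u' (deriv A x) * deriv (deriv A) x) has_real_derivative
      u'' (deriv A x) * (deriv (deriv A) x)\<^sup>2 + u' (deriv A x) * deriv (deriv (deriv A)) x) (at x)"
    and "isCont (\<lambda>x. u'' (deriv A x) * (deriv (deriv A) x)\<^sup>2 + u' (deriv A x) * deriv (deriv (deriv A)) x) x"
proof -
  note A' = C3_onD(2) [OF assms(2,3)] and A'' = C3_onD(3) [OF assms(2,3)]
  show "((\<lambda>x. u (deriv A x)) has_real_derivative u' (deriv A x) * deriv (deriv A) x) (at x)"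
    using DERIV_chain2 [OF u(1) A'] .
  have "((\<lambda>x. u' (deriv A x) * deriv (deriv A) x) has_real_derivative
      u'' (deriv A x) * deriv (deriv A) x * deriv (deriv A) x + deriv (deriv (deriv A)) x * u' (deriv A x)) (at x)"
    using DERIV_mult [OF DERIV_chain2 [OF u(2) A'] A''] .
  then show "((\<lambda>x. u' (deriv A x) * deriv (deriv A) x) has_real_derivative
      u'' (deriv A x) * (deriv (deriv A) x)\<^sup>2 + u' (deriv A x) * deriv (deriv (deriv A)) x) (at x)"
    by (simp add: power2_eq_square algebra_simps)
  show "isCont (\<lambda>x. u'' (deriv A x) * (deriv (deriv A) x)\<^sup>2 + u' (deriv A x) * deriv (deriv (deriv A)) x) x"
    using isCont_o2 [OF DERIV_isCont [OF A'] u(3)] isCont_o2 [OF DERIV_isCont [OF A'] DERIV_isCont [OF u(2)]]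
      DERIV_isCont [OF A''] C3_onD(4) [OF assms(2,3,1)]
    by (intro continuous_intros)
qed

section \<open>Menger curvature\<close>

lemma equidistant_iff:
  "cmod (q - w) = cmod q \<longleftrightarrow> 2 * (Re q * Re w + Im q * Im w) = (cmod w)\<^sup>2"
proof -
  have "cmod (q - w) = cmod q \<longleftrightarrow> (cmod (q - w))\<^sup>2 = (cmod q)\<^sup>2"
    by (simp add: power2_eq_iff_nonneg)
  then show ?thesis unfolding cmod_power2 by (auto simp: power2_diff algebra_simps)
qed

lemma cramer_2x2:
  fixes a b c d e f x y :: real
  assumes "a * d - b * c \<noteq> 0"
  shows "a * x + b * y = e \<and> c * x + d * y = f \<longleftrightarrow>
    (a * d - b * c) * x = d * e - b * f \<and> (a * d - b * c) * y = a * f - c * e"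
proof
  assume "a * x + b * y = e \<and> c * x + d * y = f"
  then show "(a * d - b * c) * x = d * e - b * f \<and> (a * d - b * c) * y = a * f - c * e"
    by (auto simp: algebra_simps)
next
  assume sol: "(a * d - b * c) * x = d * e - b * f \<and> (a * d - b * c) * y = a * f - c * e"
  have "(a * d - b * c) * (a * x + b * y) = a * ((a * d - b * c) * x) + b * ((a * d - b * c) * y)"
    "(a * d - b * c) * (c * x + d * y) = c * ((a * d - b * c) * x) + d * ((a * d - b * c) * y)"
    by algebra+
  then have "(a * d - b * c) * (a * x + b * y) = (a * d - b * c) * e"
    "(a * d - b * c) * (c * x + d * y) = (a * d - b * c) * f"
    unfolding sol [THEN conjunct1] sol [THEN conjunct2] by algebra+
  then show "a * x + b * y = e \<and> c * x + d * y = f" using assms by simp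
qed

lemma circumcenter_eq_iff:
  fixes u v q :: complex
  assumes "Im (cnj u * v) \<noteq> 0"
  shows "cmod (q - u) = cmod q \<and> cmod (q - v) = cmod q \<longleftrightarrow>
    q = \<i> * (of_real ((cmod v)\<^sup>2) * u - of_real ((cmod u)\<^sup>2) * v) / of_real (2 * Im (cnj u * v))"
proof -
  define D where "D = Im (cnj u * v)"
  have "cmod (q - u) = cmod q \<and> cmod (q - v) = cmod q \<longleftrightarrow>
      Re u * Re q + Im u * Im q = (cmod u)\<^sup>2 / 2 \<and> Re v * Re q + Im v * Im q = (cmod v)\<^sup>2 / 2"
    unfolding equidistant_iff by (auto simp: algebra_simps)
  also have "\<dots> \<longleftrightarrow> D * Re q = Im v * ((cmod u)\<^sup>2 / 2) - Im u * ((cmod v)\<^sup>2 / 2)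
      \<and> D * Im q = Re u * ((cmod v)\<^sup>2 / 2) - Re v * ((cmod u)\<^sup>2 / 2)"
    using cramer_2x2 [where a = "Re u" and b = "Im u" and c = "Re v" and d = "Im v"
        and e = "(cmod u)\<^sup>2 / 2" and f = "(cmod v)\<^sup>2 / 2" and x = "Re q" and y = "Im q"] assms
    unfolding D_def by simp
  also have "\<dots> \<longleftrightarrow> q = \<i> * (of_real ((cmod v)\<^sup>2) * u - of_real ((cmod u)\<^sup>2) * v) / of_real (2 * D)"
    using assms unfolding D_def [symmetric]
    by (simp add: complex_eq_iff Re_divide_of_real Im_divide_of_real field_simps)
  finally show ?thesis unfolding D_def .
qed

lemma collinear_iff_Im_cnj_mult: "collinear {z1, z2, z3} \<longleftrightarrow> Im (cnj (z2 - z1) * (z3 - z1)) = 0"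
proof -
  have "collinear {z1, z2, z3} \<longleftrightarrow> collinear {0, z2 - z1, z3 - z1}"
    using collinear_3 [of z2 z1 z3] by (simp add: insert_commute)
  also have "\<dots> \<longleftrightarrow> (z3 - z1) / (z2 - z1) \<in> \<real>"
    by (rule collinear_iff_Reals)
  also have "\<dots> \<longleftrightarrow> Im (cnj (z2 - z1) * (z3 - z1)) = 0"
    by (cases "z2 = z1") (auto simp: complex_is_Real_iff Im_divide algebra_simps)
  finally show ?thesis .
qed

lemma norm_circumcenter_sq:
  "(cmod (of_real ((cmod v)\<^sup>2) * u - of_real ((cmod u)\<^sup>2) * v))\<^sup>2
    = (cmod u)\<^sup>2 * (cmod v)\<^sup>2 * (cmod (v - u))\<^sup>2"
  unfolding cmod_power2 by (simp add: power2_eq_square algebra_simps)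

lemma menger_sq:
  "(menger z1 z2 z3)\<^sup>2 = 4 * (Im (cnj (z2 - z1) * (z3 - z1)))\<^sup>2
    / ((cmod (z2 - z1))\<^sup>2 * (cmod (z3 - z1))\<^sup>2 * (cmod (z3 - z2))\<^sup>2)"
proof (cases "collinear {z1, z2, z3}")
  case True
  then show ?thesis by (simp add: menger_def collinear_iff_Im_cnj_mult)
next
  case False
  define u v where "u = z2 - z1" and "v = z3 - z1"
  define D where "D = Im (cnj u * v)"
  have "D \<noteq> 0" using False unfolding D_def u_def v_def collinear_iff_Im_cnj_mult .
  define centre where "centre = \<i> * (of_real ((cmod v)\<^sup>2) * u - of_real ((cmod u)\<^sup>2) * v) / of_real (2 * D)"
  have "dist p z1 = r \<and> dist p z2 = r \<and> dist p z3 = r \<longleftrightarrow> p = z1 + centre \<and> r = cmod centre" for p r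
  proof -
    have "dist p z1 = cmod (p - z1)" "dist p z2 = cmod ((p - z1) - u)" "dist p z3 = cmod ((p - z1) - v)"
      unfolding u_def v_def dist_complex_def by (simp_all add: algebra_simps)
    then show ?thesis
      using circumcenter_eq_iff [of u v "p - z1"] \<open>D \<noteq> 0\<close> unfolding D_def [symmetric] centre_def [symmetric]
      by auto
  qed
  then have "(THE r. \<exists>p. dist p z1 = r \<and> dist p z2 = r \<and> dist p z3 = r) = cmod centre"
    by (intro the_equality) auto
  then have "menger z1 z2 z3 = 1 / cmod centre" using False by (simp add: menger_def)
  moreover have "(cmod centre)\<^sup>2 = (cmod u)\<^sup>2 * (cmod v)\<^sup>2 * (cmod (v - u))\<^sup>2 / (4 * D\<^sup>2)"
    unfolding centre_def norm_divide norm_mult power_divide power_mult_distrib norm_circumcenter_sq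
    by (simp add: power2_eq_square)
  moreover have "v - u = z3 - z2" unfolding u_def v_def by simp
  ultimately show ?thesis unfolding D_def u_def v_def by (simp add: power_one_over)
qed

lemma Re_divide_mult_cnj:
  "Re (1 / (w * cnj w')) = (Re w * Re w' + Im w * Im w') / ((cmod w)\<^sup>2 * (cmod w')\<^sup>2)"
proof -
  have "Re (1 / (w * cnj w')) = Re (w * cnj w') / (cmod (w * cnj w'))\<^sup>2"
    by (simp add: Re_divide cmod_power2)
  then show ?thesis by (simp add: norm_mult power_mult_distrib)
qed

lemma melnikov_identity:
  assumes "z1 \<noteq> z2" "z1 \<noteq> z3" "z2 \<noteq> z3"
  shows "Re (1 / ((z1 - z2) * cnj (z1 - z3)) + 1 / ((z1 - z3) * cnj (z1 - z2))
      + 1 / ((z2 - z1) * cnj (z2 - z3)) + 1 / ((z2 - z3) * cnj (z2 - z1))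
      + 1 / ((z3 - z1) * cnj (z3 - z2)) + 1 / ((z3 - z2) * cnj (z3 - z1)))
    = (menger z1 z2 z3)\<^sup>2"
proof -
  define u v where "u = z2 - z1" and "v = z3 - z1"
  define N1 N2 N3 where "N1 = (cmod u)\<^sup>2" and "N2 = (cmod v)\<^sup>2" and "N3 = (cmod (v - u))\<^sup>2"
  have "N1 \<noteq> 0" "N2 \<noteq> 0" "N3 \<noteq> 0"
    using assms unfolding N1_def N2_def N3_def u_def v_def by auto
  have diffs: "z1 - z2 = - u" "z1 - z3 = - v" "z2 - z1 = u" "z3 - z1 = v" "z2 - z3 = - (v - u)" "z3 - z2 = v - u"
    unfolding u_def v_def by simp_all
  have norms: "(cmod (- u))\<^sup>2 = N1" "(cmod u)\<^sup>2 = N1" "(cmod (- v))\<^sup>2 = N2" "(cmod v)\<^sup>2 = N2"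
    "(cmod (- (v - u)))\<^sup>2 = N3" "(cmod (v - u))\<^sup>2 = N3"
    unfolding N1_def N2_def N3_def by (simp_all add: norm_minus_commute)
  have "Re (1 / ((z1 - z2) * cnj (z1 - z3)) + 1 / ((z1 - z3) * cnj (z1 - z2))
      + 1 / ((z2 - z1) * cnj (z2 - z3)) + 1 / ((z2 - z3) * cnj (z2 - z1))
      + 1 / ((z3 - z1) * cnj (z3 - z2)) + 1 / ((z3 - z2) * cnj (z3 - z1)))
    = 4 * (Im (cnj u * v))\<^sup>2 / (N1 * N2 * N3)"
    unfolding diffs plus_complex.sel Re_divide_mult_cnj norms
    using \<open>N1 \<noteq> 0\<close> \<open>N2 \<noteq> 0\<close> \<open>N3 \<noteq> 0\<close>
    by (simp add: divide_simps)
      (unfold N1_def N2_def N3_def cmod_power2, simp add: power2_eq_square algebra_simps)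
  then show ?thesis
    unfolding menger_sq N1_def N2_def N3_def u_def v_def by (simp add: norm_minus_commute)
qed

section \<open>The kernel on a graph\<close>

definition graph_point :: "(real \<Rightarrow> real) \<Rightarrow> real \<Rightarrow> complex" where
  "graph_point A x = Complex x (A x)"

text \<open>The squared unit tangent (see \<open>unit_tangent_sq_eq\<close>), written through its real components so
  that the real mean value theorem applies to it.\<close>

definition unit_tangent_sq :: "(real \<Rightarrow> real) \<Rightarrow> real \<Rightarrow> complex" where
  "unit_tangent_sq A x = Complex (cos2_slope (deriv A x)) (sin2_slope (deriv A x))"

definition symT :: "(complex \<Rightarrow> complex \<Rightarrow> complex) \<Rightarrow> complex \<Rightarrow> complex \<Rightarrow> complex \<Rightarrow> complex" where
  "symT K z1 z2 z3 =
     (let z = triple z1 z2 z3 in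
      \<Sum>\<sigma> \<in> {\<sigma>. \<sigma> permutes {0,1,2::nat}}. K (z (\<sigma> 0)) (z (\<sigma> 1)) * K (z (\<sigma> 0)) (z (\<sigma> 2)))"

lemma graph_curve_eq_image: "graph_curve A I = graph_point A ` I"
  unfolding graph_curve_def graph_point_def ..

lemma graph_point_eq_iff: "graph_point A x = graph_point A y \<longleftrightarrow> x = y"
  unfolding graph_point_def by (auto simp: complex_eq_iff)

lemma arclen_factor_pos: "0 < arclen_factor A x"
  unfolding arclen_factor_def by (simp add: add_pos_nonneg)

lemma arclen_factor_sq: "(arclen_factor A x)\<^sup>2 = 1 + (deriv A x)\<^sup>2"
  unfolding arclen_factor_def by (simp add: add_nonneg_nonneg)

lemma kernel_graph_point:
  "kernel A (graph_point A x) (graph_point A y)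
    = (of_real (deriv A x) - \<i>) / (of_real (arclen_factor A x) * (graph_point A x - graph_point A y))"
proof -
  have "of_real (x - y) + \<i> * of_real (A x - A y) = graph_point A x - graph_point A y"
    unfolding graph_point_def by (simp add: complex_eq_iff)
  then show ?thesis unfolding kernel_def Let_def by (simp add: graph_point_def)
qed

lemma kernel_mult_cnj_kernel:
  fixes A :: "real \<Rightarrow> real"
  defines "\<gamma> \<equiv> graph_point A"
  shows "kernel A (\<gamma> x) (\<gamma> y) * cnj (kernel A (\<gamma> x) (\<gamma> w)) = 1 / ((\<gamma> x - \<gamma> y) * cnj (\<gamma> x - \<gamma> w))"
proof -
  have "kernel A (\<gamma> x) (\<gamma> y) * cnj (kernel A (\<gamma> x) (\<gamma> w))
      = ((of_real (deriv A x) - \<i>) * cnj (of_real (deriv A x) - \<i>))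
        / (of_real ((arclen_factor A x)\<^sup>2) * ((\<gamma> x - \<gamma> y) * cnj (\<gamma> x - \<gamma> w)))"
    unfolding \<gamma>_def kernel_graph_point by (simp add: power2_eq_square mult_ac)
  also have "(of_real (deriv A x) - \<i>) * cnj (of_real (deriv A x) - \<i>) = complex_of_real ((arclen_factor A x)\<^sup>2)"
    unfolding arclen_factor_sq by (simp add: complex_eq_iff power2_eq_square)
  finally show ?thesis
    using arclen_factor_pos [of A x] by (simp add: nonzero_divide_mult_cancel_left)
qed

lemma unit_tangent_sq_eq:
  "unit_tangent_sq A x = (Complex 1 (deriv A x))\<^sup>2 / of_real ((arclen_factor A x)\<^sup>2)"
  unfolding unit_tangent_sq_def cos2_slope_def sin2_slope_def arclen_factor_sq
  by (simp add: complex_eq_iff Re_divide_of_real Im_divide_of_real power2_eq_square)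

lemma kernel_mult_kernel:
  fixes A :: "real \<Rightarrow> real"
  defines "\<gamma> \<equiv> graph_point A"
  shows "kernel A (\<gamma> x) (\<gamma> y) * kernel A (\<gamma> x) (\<gamma> w) = - unit_tangent_sq A x / ((\<gamma> x - \<gamma> y) * (\<gamma> x - \<gamma> w))"
proof -
  have "kernel A (\<gamma> x) (\<gamma> y) * kernel A (\<gamma> x) (\<gamma> w)
      = (of_real (deriv A x) - \<i>)\<^sup>2 / of_real ((arclen_factor A x)\<^sup>2) / ((\<gamma> x - \<gamma> y) * (\<gamma> x - \<gamma> w))"
    unfolding \<gamma>_def kernel_graph_point by (simp add: power2_eq_square mult_ac)
  also have "(of_real (deriv A x) - \<i>)\<^sup>2 = - (Complex 1 (deriv A x))\<^sup>2"
    by (simp add: complex_eq_iff power2_eq_square)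
  finally show ?thesis unfolding unit_tangent_sq_eq by simp
qed

lemma sum_permutes_3:
  fixes g :: "nat \<Rightarrow> nat \<Rightarrow> nat \<Rightarrow> 'a::comm_monoid_add"
  shows "(\<Sum>\<sigma>\<in>{\<sigma>. \<sigma> permutes {0,1,2::nat}}. g (\<sigma> 0) (\<sigma> 1) (\<sigma> 2))
    = g 0 1 2 + g 0 2 1 + g 1 0 2 + g 1 2 0 + g 2 0 1 + g 2 1 0"
  by (simp add: sum_over_permutations_insert transpose_def ac_simps)

lemma symS_expand:
  "symS K z1 z2 z3 = K z1 z2 * cnj (K z1 z3) + K z1 z3 * cnj (K z1 z2) + K z2 z1 * cnj (K z2 z3)
     + K z2 z3 * cnj (K z2 z1) + K z3 z1 * cnj (K z3 z2) + K z3 z2 * cnj (K z3 z1)"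
  using sum_permutes_3 [of "\<lambda>i j k. K (triple z1 z2 z3 i) (triple z1 z2 z3 j) * cnj (K (triple z1 z2 z3 i) (triple z1 z2 z3 k))"]
  unfolding symS_def Let_def by (simp add: triple_def)

lemma symT_expand:
  "symT K z1 z2 z3 = K z1 z2 * K z1 z3 + K z1 z3 * K z1 z2 + K z2 z1 * K z2 z3
     + K z2 z3 * K z2 z1 + K z3 z1 * K z3 z2 + K z3 z2 * K z3 z1"
  using sum_permutes_3 [of "\<lambda>i j k. K (triple z1 z2 z3 i) (triple z1 z2 z3 j) * K (triple z1 z2 z3 i) (triple z1 z2 z3 k)"]
  unfolding symT_def Let_def by (simp add: triple_def)

lemma symS_Re:
  "symS (\<lambda>w z. of_real (Re (K w z))) z1 z2 z3 = of_real ((Re (symS K z1 z2 z3) + Re (symT K z1 z2 z3)) / 2)"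
  unfolding symS_expand symT_expand by (simp add: field_simps)

lemma symS_Im:
  "symS (\<lambda>w z. of_real (Im (K w z))) z1 z2 z3 = of_real ((Re (symS K z1 z2 z3) - Re (symT K z1 z2 z3)) / 2)"
  unfolding symS_expand symT_expand by (simp add: field_simps)

lemma Re_symS_kernel_graph:
  fixes A :: "real \<Rightarrow> real"
  defines "\<gamma> \<equiv> graph_point A"
  assumes "a \<noteq> b" "a \<noteq> c" "b \<noteq> c"
  shows "Re (symS (kernel A) (\<gamma> a) (\<gamma> b) (\<gamma> c)) = (menger (\<gamma> a) (\<gamma> b) (\<gamma> c))\<^sup>2"
  using melnikov_identity [of "\<gamma> a" "\<gamma> b" "\<gamma> c"] assms
  unfolding symS_expand \<gamma>_def kernel_mult_cnj_kernel by (simp add: graph_point_eq_iff)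

lemma symT_kernel_graph:
  fixes A :: "real \<Rightarrow> real"
  defines "\<gamma> \<equiv> graph_point A" and "T \<equiv> unit_tangent_sq A"
  assumes "a \<noteq> b" "a \<noteq> c" "b \<noteq> c"
  shows "symT (kernel A) (\<gamma> a) (\<gamma> b) (\<gamma> c) = - 2 * ((divdiff2 T a b c / divdiff \<gamma> a b
      - divdiff T b c * divdiff2 \<gamma> a b c / (divdiff \<gamma> a b * divdiff \<gamma> b c)) / divdiff \<gamma> a c)"
proof -
  have "symT (kernel A) (\<gamma> a) (\<gamma> b) (\<gamma> c) = - 2 * (T a / ((\<gamma> a - \<gamma> b) * (\<gamma> a - \<gamma> c))
      + T b / ((\<gamma> b - \<gamma> a) * (\<gamma> b - \<gamma> c)) + T c / ((\<gamma> c - \<gamma> a) * (\<gamma> c - \<gamma> b)))"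
    unfolding symT_expand \<gamma>_def T_def kernel_mult_kernel by (simp add: mult.commute)
  also have "T a / ((\<gamma> a - \<gamma> b) * (\<gamma> a - \<gamma> c)) + T b / ((\<gamma> b - \<gamma> a) * (\<gamma> b - \<gamma> c))
      + T c / ((\<gamma> c - \<gamma> a) * (\<gamma> c - \<gamma> b))
    = (divdiff2 T a b c / divdiff \<gamma> a b
      - divdiff T b c * divdiff2 \<gamma> a b c / (divdiff \<gamma> a b * divdiff \<gamma> b c)) / divdiff \<gamma> a c"
    by (rule divdiff2_reparam) (use assms in \<open>simp_all add: graph_point_eq_iff\<close>)
  finally show ?thesis .
qed

lemma menger_graph_sq:
  fixes A :: "real \<Rightarrow> real"
  defines "\<gamma> \<equiv> graph_point A"
  assumes distinct: "a \<noteq> b" "a \<noteq> c" "b \<noteq> c"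
  shows "(menger (\<gamma> a) (\<gamma> b) (\<gamma> c))\<^sup>2 = 4 * (divdiff2 A a b c)\<^sup>2
    / ((1 + (divdiff A a b)\<^sup>2) * (1 + (divdiff A a c)\<^sup>2) * (1 + (divdiff A b c)\<^sup>2))"
proof -
  have norm: "(cmod (\<gamma> y - \<gamma> x))\<^sup>2 = (x - y)\<^sup>2 * (1 + (divdiff A x y)\<^sup>2)" if "x \<noteq> y" for x y
  proof -
    have "\<gamma> x - \<gamma> y = of_real (x - y) * Complex 1 (divdiff A x y)"
      using that unfolding \<gamma>_def graph_point_def divdiff_def by (simp add: complex_eq_iff)
    then show ?thesis by (simp add: norm_minus_commute norm_mult cmod_power2 power_mult_distrib)
  qed
  have "Im (cnj (\<gamma> b - \<gamma> a) * (\<gamma> c - \<gamma> a)) = (b - a) * (c - a) * (c - b) * divdiff2 A a b c"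
    using distinct unfolding \<gamma>_def graph_point_def divdiff2_lagrange [OF distinct]
    by (simp add: divide_simps) (simp add: algebra_simps)
  then show ?thesis
    unfolding menger_sq norm [OF distinct(1)] norm [OF distinct(2)] norm [OF distinct(3)] using distinct
    by (simp add: divide_simps) (simp add: power2_eq_square algebra_simps)
qed

lemma symS_ReK_ImK_graph:
  fixes A :: "real \<Rightarrow> real"
  defines "\<gamma> \<equiv> graph_point A"
  assumes "a \<noteq> b" "a \<noteq> c" "b \<noteq> c"
  defines "m \<equiv> (menger (\<gamma> a) (\<gamma> b) (\<gamma> c))\<^sup>2" and "t \<equiv> Re (symT (kernel A) (\<gamma> a) (\<gamma> b) (\<gamma> c))"
  shows "symS (ReK A) (\<gamma> a) (\<gamma> b) (\<gamma> c) - of_real (3/2 * m) = of_real ((t - 2 * m) / 2)"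
    and "symS (ImK A) (\<gamma> a) (\<gamma> b) (\<gamma> c) + of_real (1/2 * m) = - of_real ((t - 2 * m) / 2)"
proof -
  have ReK: "ReK A = (\<lambda>w z. of_real (Re (kernel A w z)))" and ImK: "ImK A = (\<lambda>w z. of_real (Im (kernel A w z)))"
    unfolding ReK_def ImK_def by (rule refl)+
  show "symS (ReK A) (\<gamma> a) (\<gamma> b) (\<gamma> c) - of_real (3/2 * m) = of_real ((t - 2 * m) / 2)"
    "symS (ImK A) (\<gamma> a) (\<gamma> b) (\<gamma> c) + of_real (1/2 * m) = - of_real ((t - 2 * m) / 2)"
    unfolding m_def t_def ReK ImK symS_Re symS_Im \<gamma>_def Re_symS_kernel_graph [OF assms(2-4)]
      of_real_diff [symmetric] of_real_add [symmetric] of_real_minus [symmetric]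
    by (simp_all add: field_simps)
qed

section \<open>Behaviour near a point of the graph\<close>

lemma tendsto_graph_divdiffs:
  assumes "open J" "C3_on J A" "x0 \<in> J"
  defines "\<gamma> \<equiv> graph_point A" and "g \<equiv> Complex 1 (deriv A x0)"
  shows "((\<lambda>(a, b, c). divdiff \<gamma> a b) \<longlongrightarrow> g) (triples_at x0)"
    and "((\<lambda>(a, b, c). divdiff \<gamma> a c) \<longlongrightarrow> g) (triples_at x0)"
    and "((\<lambda>(a, b, c). divdiff \<gamma> b c) \<longlongrightarrow> g) (triples_at x0)"
    and "((\<lambda>(a, b, c). divdiff2 \<gamma> a b c) \<longlongrightarrow> \<i> * of_real (deriv (deriv A) x0 / 2)) (triples_at x0)"
proof -
  note A = C3_onD(1) [OF assms(2)] and A' = C3_onD(2) [OF assms(2)] and A'' = C3_onD(3) [OF assms(2)]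
  have id: "\<And>x. ((\<lambda>x. x) has_real_derivative 1) (at x)" "\<And>x. ((\<lambda>_. 1) has_real_derivative 0) (at x)"
    by (auto intro!: derivative_eq_intros)
  note lim = tendsto_divdiff_triples [OF assms(1,3) id(1)] tendsto_divdiff_triples [OF assms(1,3) A]
    tendsto_divdiff2_triples [OF assms(1,3) id] tendsto_divdiff2_triples [OF assms(1,3) A A']
  have \<gamma>: "\<gamma> = (\<lambda>x. Complex x (A x))" unfolding \<gamma>_def graph_point_def ..
  show "((\<lambda>(a, b, c). divdiff \<gamma> a b) \<longlongrightarrow> g) (triples_at x0)"
    "((\<lambda>(a, b, c). divdiff \<gamma> a c) \<longlongrightarrow> g) (triples_at x0)"
    "((\<lambda>(a, b, c). divdiff \<gamma> b c) \<longlongrightarrow> g) (triples_at x0)"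
    "((\<lambda>(a, b, c). divdiff2 \<gamma> a b c) \<longlongrightarrow> \<i> * of_real (deriv (deriv A) x0 / 2)) (triples_at x0)"
    using lim DERIV_isCont [OF A' [OF assms(3)]] DERIV_isCont [OF A'' [OF assms(3)]]
    unfolding \<gamma> g_def divdiff_Complex divdiff2_Complex case_prod_unfold
    by (auto intro!: tendsto_eq_intros simp: complex_eq_iff)
qed

lemma tendsto_unit_tangent_sq_divdiffs:
  assumes "open J" "C3_on J A" "x0 \<in> J"
  defines "T \<equiv> unit_tangent_sq A" and "g \<equiv> Complex 1 (deriv A x0)"
    and "b0 \<equiv> deriv (deriv A) x0" and "c0 \<equiv> deriv (deriv (deriv A)) x0"
  shows "((\<lambda>(a, b, c). divdiff T b c) \<longlongrightarrow> 2 * \<i> / (cnj g)\<^sup>2 * of_real b0) (triples_at x0)"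
    and "((\<lambda>(a, b, c). divdiff2 T a b c)
      \<longlongrightarrow> (- 4 / (cnj g) ^ 3 * of_real (b0\<^sup>2) + 2 * \<i> / (cnj g)\<^sup>2 * of_real c0) / 2) (triples_at x0)"
proof -
  have cos2: "isCont (\<lambda>t. (12 * t\<^sup>2 - 4) / (1 + t\<^sup>2) ^ 3) t"
    and sin2: "isCont (\<lambda>t. (4 * t ^ 3 - 12 * t) / (1 + t\<^sup>2) ^ 3) t" for t :: real
    using one_plus_square_pos [of t] by (auto intro!: continuous_intros)
  note C = C3_on_compose_deriv [OF assms(1,2), OF _ cos2_slope_deriv cos2_slope_deriv2 cos2]
  note S = C3_on_compose_deriv [OF assms(1,2), OF _ sin2_slope_deriv sin2_slope_deriv2 sin2]
  note lim = tendsto_divdiff_triples(3) [OF assms(1,3) C(1) DERIV_isCont [OF C(2) [OF assms(3)]]]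
    tendsto_divdiff_triples(3) [OF assms(1,3) S(1) DERIV_isCont [OF S(2) [OF assms(3)]]]
    tendsto_divdiff2_triples [OF assms(1,3) C(1,2) C(3) [OF assms(3)]]
    tendsto_divdiff2_triples [OF assms(1,3) S(1,2) S(3) [OF assms(3)]]
  have T: "T = (\<lambda>x. Complex (cos2_slope (deriv A x)) (sin2_slope (deriv A x)))"
    unfolding T_def unit_tangent_sq_def ..
  show "((\<lambda>(a, b, c). divdiff T b c) \<longlongrightarrow> 2 * \<i> / (cnj g)\<^sup>2 * of_real b0) (triples_at x0)"
    "((\<lambda>(a, b, c). divdiff2 T a b c)
      \<longlongrightarrow> (- 4 / (cnj g) ^ 3 * of_real (b0\<^sup>2) + 2 * \<i> / (cnj g)\<^sup>2 * of_real c0) / 2) (triples_at x0)"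
    using lim unfolding T g_def b0_def c0_def divdiff_Complex divdiff2_Complex case_prod_unfold
      slope_derivs_complex [symmetric]
    by (auto intro!: tendsto_eq_intros simp: complex_eq_iff)
qed

lemma symT_limit_value:
  fixes a b c :: real
  defines "g \<equiv> Complex 1 a"
  shows "Re (- 2 * ((((- 4 / (cnj g) ^ 3 * of_real (b\<^sup>2) + 2 * \<i> / (cnj g)\<^sup>2 * of_real c) / 2) / g
      - 2 * \<i> / (cnj g)\<^sup>2 * of_real b * (\<i> * of_real (b / 2)) / (g * g)) / g))
    = 2 * b\<^sup>2 / (1 + a\<^sup>2) ^ 3"
proof -
  have gg: "g * cnj g = of_real (1 + a\<^sup>2)"
    unfolding g_def by (simp add: complex_eq_iff power2_eq_square)
  have "g \<noteq> 0" "cnj g \<noteq> 0" unfolding g_def by (simp_all add: complex_eq_iff)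
  then have "- 2 * ((((- 4 / (cnj g) ^ 3 * of_real (b\<^sup>2) + 2 * \<i> / (cnj g)\<^sup>2 * of_real c) / 2) / g
      - 2 * \<i> / (cnj g)\<^sup>2 * of_real b * (\<i> * of_real (b / 2)) / (g * g)) / g)
    = (4 * of_real (b\<^sup>2) * g - 2 * \<i> * of_real c * (g * cnj g) - 2 * of_real (b\<^sup>2) * cnj g) / (g * cnj g) ^ 3"
    by (simp add: field_simps power2_eq_square power3_eq_cube)
  also have "\<dots> = (4 * of_real (b\<^sup>2) * g - 2 * \<i> * of_real (c * (1 + a\<^sup>2)) - 2 * of_real (b\<^sup>2) * cnj g)
      / of_real ((1 + a\<^sup>2) ^ 3)"
    unfolding gg by simp
  finally show ?thesis
    unfolding g_def by (simp add: Re_divide_of_real)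
qed

lemma tendsto_menger_graph_sq:
  assumes "open J" "C3_on J A" "x0 \<in> J"
  shows "((\<lambda>(a, b, c). (menger (graph_point A a) (graph_point A b) (graph_point A c))\<^sup>2)
    \<longlongrightarrow> (deriv (deriv A) x0)\<^sup>2 / (1 + (deriv A x0)\<^sup>2) ^ 3) (triples_at x0)"
proof -
  note A = C3_onD(1) [OF assms(2)] and A' = C3_onD(2) [OF assms(2)] and A'' = C3_onD(3) [OF assms(2)]
  note lim = tendsto_divdiff_triples [OF assms(1,3) A DERIV_isCont [OF A' [OF assms(3)]]]
    tendsto_divdiff2_triples [OF assms(1,3) A A' DERIV_isCont [OF A'' [OF assms(3)]]]
  define M where "M = (\<lambda>(a, b, c). (menger (graph_point A a) (graph_point A b) (graph_point A c))\<^sup>2)"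
  define M' where "M' = (\<lambda>(a, b, c). 4 * (divdiff2 A a b c)\<^sup>2
      / ((1 + (divdiff A a b)\<^sup>2) * (1 + (divdiff A a c)\<^sup>2) * (1 + (divdiff A b c)\<^sup>2)))"
  have "(M' \<longlongrightarrow> 4 * (deriv (deriv A) x0 / 2)\<^sup>2
      / ((1 + (deriv A x0)\<^sup>2) * (1 + (deriv A x0)\<^sup>2) * (1 + (deriv A x0)\<^sup>2))) (triples_at x0)"
    using lim one_plus_square_pos [of "deriv A x0"] unfolding M'_def case_prod_unfold
    by (intro tendsto_intros) auto
  moreover have "eventually (\<lambda>p. M' p = M p) (triples_at x0)"
    using eventually_triples_at_distinct [of x0]
    by eventually_elim (auto simp: M_def M'_def case_prod_unfold menger_graph_sq)
  ultimately have "(M \<longlongrightarrow> 4 * (deriv (deriv A) x0 / 2)\<^sup>2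
      / ((1 + (deriv A x0)\<^sup>2) * (1 + (deriv A x0)\<^sup>2) * (1 + (deriv A x0)\<^sup>2))) (triples_at x0)"
    by (rule Lim_transform_eventually)
  then show ?thesis
    unfolding M_def by (simp add: power2_eq_square power3_eq_cube)
qed

lemma tendsto_Re_symT_graph:
  assumes "open J" "C3_on J A" "x0 \<in> J"
  shows "((\<lambda>(a, b, c). Re (symT (kernel A) (graph_point A a) (graph_point A b) (graph_point A c)))
    \<longlongrightarrow> 2 * (deriv (deriv A) x0)\<^sup>2 / (1 + (deriv A x0)\<^sup>2) ^ 3) (triples_at x0)"
proof -
  define \<gamma> T where "\<gamma> = graph_point A" and "T = unit_tangent_sq A"
  define g where "g = Complex 1 (deriv A x0)"
  define R where "R = (\<lambda>(a, b, c). Re (symT (kernel A) (\<gamma> a) (\<gamma> b) (\<gamma> c)))"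
  define R' where "R' = (\<lambda>(a, b, c). Re (- 2 * ((divdiff2 T a b c / divdiff \<gamma> a b
      - divdiff T b c * divdiff2 \<gamma> a b c / (divdiff \<gamma> a b * divdiff \<gamma> b c)) / divdiff \<gamma> a c)))"
  have "g \<noteq> 0" unfolding g_def by (simp add: complex_eq_iff)
  then have "(R' \<longlongrightarrow> Re (- 2 * ((((- 4 / (cnj g) ^ 3 * of_real ((deriv (deriv A) x0)\<^sup>2)
      + 2 * \<i> / (cnj g)\<^sup>2 * of_real (deriv (deriv (deriv A)) x0)) / 2) / g
      - 2 * \<i> / (cnj g)\<^sup>2 * of_real (deriv (deriv A) x0) * (\<i> * of_real (deriv (deriv A) x0 / 2))
        / (g * g)) / g))) (triples_at x0)"
    using tendsto_graph_divdiffs [OF assms] tendsto_unit_tangent_sq_divdiffs [OF assms]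
    unfolding R'_def \<gamma>_def T_def g_def case_prod_unfold
    by (intro tendsto_intros) auto
  moreover have "eventually (\<lambda>p. R' p = R p) (triples_at x0)"
    using eventually_triples_at_distinct [of x0]
    by eventually_elim (auto simp: R_def R'_def \<gamma>_def T_def case_prod_unfold symT_kernel_graph)
  ultimately have "(R \<longlongrightarrow> 2 * (deriv (deriv A) x0)\<^sup>2 / (1 + (deriv A x0)\<^sup>2) ^ 3) (triples_at x0)"
    unfolding g_def symT_limit_value by (rule Lim_transform_eventually)
  then show ?thesis unfolding R_def \<gamma>_def .
qed

lemma eventually_graph_estimates:
  assumes "open J" "C3_on J A" "x0 \<in> J" "0 < \<epsilon>"
  defines "\<gamma> \<equiv> graph_point A" and "\<kappa>0 \<equiv> deriv (deriv A) x0 / (arclen_factor A x0) ^ 3"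
  shows "eventually (\<lambda>(a, b, c). \<bar>(menger (\<gamma> a) (\<gamma> b) (\<gamma> c))\<^sup>2 - \<kappa>0\<^sup>2\<bar> < \<epsilon>
    \<and> \<bar>Re (symT (kernel A) (\<gamma> a) (\<gamma> b) (\<gamma> c)) - 2 * (menger (\<gamma> a) (\<gamma> b) (\<gamma> c))\<^sup>2\<bar> / 2 < \<epsilon>) (triples_at x0)"
proof -
  define M where "M = (\<lambda>(a, b, c). (menger (\<gamma> a) (\<gamma> b) (\<gamma> c))\<^sup>2)"
  define R where "R = (\<lambda>(a, b, c). Re (symT (kernel A) (\<gamma> a) (\<gamma> b) (\<gamma> c)))"
  have "\<kappa>0\<^sup>2 = (deriv (deriv A) x0)\<^sup>2 / (1 + (deriv A x0)\<^sup>2) ^ 3"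
    unfolding \<kappa>0_def power_divide arclen_factor_sq [symmetric] by (simp flip: power_mult)
  then have M: "(M \<longlongrightarrow> \<kappa>0\<^sup>2) (triples_at x0)" and R: "(R \<longlongrightarrow> 2 * \<kappa>0\<^sup>2) (triples_at x0)"
    using tendsto_menger_graph_sq [OF assms(1-3)] tendsto_Re_symT_graph [OF assms(1-3)]
    unfolding M_def R_def \<gamma>_def by simp_all
  have RM: "((\<lambda>p. R p - 2 * M p) \<longlongrightarrow> 0) (triples_at x0)"
    using tendsto_diff [OF R tendsto_mult [OF tendsto_const M, of 2]] by simp
  have "0 < 2 * \<epsilon>" using \<open>0 < \<epsilon>\<close> by simp
  from tendstoD [OF M \<open>0 < \<epsilon>\<close>] tendstoD [OF RM this]
  show ?thesis
    by eventually_elim (auto simp: M_def R_def dist_real_def)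
qed

lemma graph_local_estimates:
  fixes A :: "real \<Rightarrow> real"
  assumes "open J" "C3_on J A" "x0 \<in> J" "0 < \<epsilon>"
  defines "\<kappa>0 \<equiv> deriv (deriv A) x0 / (arclen_factor A x0) ^ 3"
  shows "\<exists>\<delta>>0. {x0 - \<delta> <..< x0 + \<delta>} \<subseteq> J
    \<and> (\<forall>z1 \<in> graph_curve A {x0 - \<delta> <..< x0 + \<delta>}. \<forall>z2 \<in> graph_curve A {x0 - \<delta> <..< x0 + \<delta>}.
        \<forall>z3 \<in> graph_curve A {x0 - \<delta> <..< x0 + \<delta>}. z1 \<noteq> z2 \<and> z1 \<noteq> z3 \<and> z2 \<noteq> z3 \<longrightarrow>
          \<bar>(menger z1 z2 z3)\<^sup>2 - \<kappa>0\<^sup>2\<bar> < \<epsilon>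
        \<and> cmod (symS (ReK A) z1 z2 z3 - of_real (3/2 * (menger z1 z2 z3)\<^sup>2)) < \<epsilon>
        \<and> cmod (symS (ImK A) z1 z2 z3 + of_real (1/2 * (menger z1 z2 z3)\<^sup>2)) < \<epsilon>)"
proof -
  define \<gamma> where "\<gamma> = graph_point A"
  obtain \<delta>1 where "0 < \<delta>1" and \<delta>1: "\<And>a b c. a \<noteq> b \<Longrightarrow> a \<noteq> c \<Longrightarrow> b \<noteq> c
      \<Longrightarrow> \<bar>a - x0\<bar> < \<delta>1 \<Longrightarrow> \<bar>b - x0\<bar> < \<delta>1 \<Longrightarrow> \<bar>c - x0\<bar> < \<delta>1
      \<Longrightarrow> \<bar>(menger (\<gamma> a) (\<gamma> b) (\<gamma> c))\<^sup>2 - \<kappa>0\<^sup>2\<bar> < \<epsilon>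
        \<and> \<bar>Re (symT (kernel A) (\<gamma> a) (\<gamma> b) (\<gamma> c)) - 2 * (menger (\<gamma> a) (\<gamma> b) (\<gamma> c))\<^sup>2\<bar> / 2 < \<epsilon>"
    using eventually_graph_estimates [OF assms(1-4)] unfolding \<gamma>_def \<kappa>0_def
    by (rule eventually_triples_atE) auto
  obtain \<delta>2 where "0 < \<delta>2" "ball x0 \<delta>2 \<subseteq> J"
    using assms(1,3) open_contains_ball by blast
  define \<delta> where "\<delta> = min \<delta>1 \<delta>2"
  have "{x0 - \<delta> <..< x0 + \<delta>} \<subseteq> ball x0 \<delta>2"
    by (auto simp: \<delta>_def dist_real_def)
  then have "{x0 - \<delta> <..< x0 + \<delta>} \<subseteq> J"
    using \<open>ball x0 \<delta>2 \<subseteq> J\<close> by blast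
  moreover have "\<bar>(menger z1 z2 z3)\<^sup>2 - \<kappa>0\<^sup>2\<bar> < \<epsilon>
        \<and> cmod (symS (ReK A) z1 z2 z3 - of_real (3/2 * (menger z1 z2 z3)\<^sup>2)) < \<epsilon>
        \<and> cmod (symS (ImK A) z1 z2 z3 + of_real (1/2 * (menger z1 z2 z3)\<^sup>2)) < \<epsilon>"
    if zs: "z1 \<in> graph_curve A {x0 - \<delta> <..< x0 + \<delta>}" "z2 \<in> graph_curve A {x0 - \<delta> <..< x0 + \<delta>}"
      "z3 \<in> graph_curve A {x0 - \<delta> <..< x0 + \<delta>}" and ne: "z1 \<noteq> z2" "z1 \<noteq> z3" "z2 \<noteq> z3" for z1 z2 z3
  proof -
    obtain a b c where "a \<in> {x0 - \<delta> <..< x0 + \<delta>}" "b \<in> {x0 - \<delta> <..< x0 + \<delta>}"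
        "c \<in> {x0 - \<delta> <..< x0 + \<delta>}" and z: "z1 = \<gamma> a" "z2 = \<gamma> b" "z3 = \<gamma> c"
      using zs unfolding graph_curve_eq_image \<gamma>_def by blast
    moreover from this have "a \<noteq> b" "a \<noteq> c" "b \<noteq> c" using ne by auto
    ultimately have "\<bar>(menger (\<gamma> a) (\<gamma> b) (\<gamma> c))\<^sup>2 - \<kappa>0\<^sup>2\<bar> < \<epsilon>
        \<and> \<bar>Re (symT (kernel A) (\<gamma> a) (\<gamma> b) (\<gamma> c)) - 2 * (menger (\<gamma> a) (\<gamma> b) (\<gamma> c))\<^sup>2\<bar> / 2 < \<epsilon>"
      by (intro \<delta>1) (auto simp: \<delta>_def abs_less_iff)
    then show ?thesis
      unfolding z \<gamma>_def symS_ReK_ImK_graph [OF \<open>a \<noteq> b\<close> \<open>a \<noteq> c\<close> \<open>b \<noteq> c\<close>] norm_minus_cancel norm_of_real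
      by (simp add: abs_minus_commute)
  qed
  ultimately show ?thesis
    using \<open>0 < \<delta>1\<close> \<open>0 < \<delta>2\<close> unfolding \<delta>_def by (intro exI [of _ "min \<delta>1 \<delta>2"]) auto
qed

lemma norm_divide_sub_less:
  fixes S :: complex and r m \<kappa> \<epsilon> :: real
  assumes "cmod (S - of_real (r * m)) < \<epsilon>" "\<bar>m - \<kappa>\<bar> < \<epsilon>" "\<epsilon> < \<kappa>"
  shows "cmod (S / of_real m - of_real r) < \<epsilon> / (\<kappa> - \<epsilon>)"
proof -
  have "0 < \<epsilon>" "0 < \<kappa> - \<epsilon>" "\<kappa> - \<epsilon> < m"
    using abs_ge_zero [of "m - \<kappa>"] assms(2,3) by linarith+
  then have "S / of_real m - of_real r = (S - of_real (r * m)) / of_real m"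
    by (simp add: field_simps)
  then have "cmod (S / of_real m - of_real r) = cmod (S - of_real (r * m)) / m"
    using \<open>0 < \<kappa> - \<epsilon>\<close> \<open>\<kappa> - \<epsilon> < m\<close> by (simp add: norm_divide)
  also have "\<dots> < \<epsilon> / m"
    using assms(1) \<open>0 < \<kappa> - \<epsilon>\<close> \<open>\<kappa> - \<epsilon> < m\<close> by (simp add: divide_strict_right_mono)
  also have "\<dots> < \<epsilon> / (\<kappa> - \<epsilon>)"
    using \<open>0 < \<epsilon>\<close> \<open>0 < \<kappa> - \<epsilon>\<close> \<open>\<kappa> - \<epsilon> < m\<close> by (intro divide_strict_left_mono) auto
  finally show ?thesis .
qed

lemma ratio_estimates:
  fixes K1 K2 :: "complex \<Rightarrow> complex \<Rightarrow> complex" and \<Gamma> :: "complex set"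
  assumes "\<forall>z1 \<in> \<Gamma>. \<forall>z2 \<in> \<Gamma>. \<forall>z3 \<in> \<Gamma>. z1 \<noteq> z2 \<and> z1 \<noteq> z3 \<and> z2 \<noteq> z3 \<longrightarrow>
      \<bar>(menger z1 z2 z3)\<^sup>2 - \<kappa>\<bar> < \<epsilon>
    \<and> cmod (symS K1 z1 z2 z3 - of_real (3/2 * (menger z1 z2 z3)\<^sup>2)) < \<epsilon>
    \<and> cmod (symS K2 z1 z2 z3 + of_real (1/2 * (menger z1 z2 z3)\<^sup>2)) < \<epsilon>"
    and "\<epsilon> < \<kappa>"
  shows "\<forall>z1 \<in> \<Gamma>. \<forall>z2 \<in> \<Gamma>. \<forall>z3 \<in> \<Gamma>. \<not> collinear {z1, z2, z3} \<longrightarrow>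
      cmod (symS K1 z1 z2 z3 / of_real ((menger z1 z2 z3)\<^sup>2) - 3/2) < \<epsilon> / (\<kappa> - \<epsilon>)
    \<and> cmod (symS K2 z1 z2 z3 / of_real ((menger z1 z2 z3)\<^sup>2) + 1/2) < \<epsilon> / (\<kappa> - \<epsilon>)"
proof (intro ballI impI)
  fix z1 z2 z3 assume "z1 \<in> \<Gamma>" "z2 \<in> \<Gamma>" "z3 \<in> \<Gamma>" "\<not> collinear {z1, z2, z3}"
  then have "z1 \<noteq> z2 \<and> z1 \<noteq> z3 \<and> z2 \<noteq> z3" by (auto simp: insert_commute)
  then have m: "\<bar>(menger z1 z2 z3)\<^sup>2 - \<kappa>\<bar> < \<epsilon>"
    and re: "cmod (symS K1 z1 z2 z3 - of_real (3/2 * (menger z1 z2 z3)\<^sup>2)) < \<epsilon>"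
    and im: "cmod (symS K2 z1 z2 z3 - of_real (- 1/2 * (menger z1 z2 z3)\<^sup>2)) < \<epsilon>"
    using assms(1) \<open>z1 \<in> \<Gamma>\<close> \<open>z2 \<in> \<Gamma>\<close> \<open>z3 \<in> \<Gamma>\<close> by auto
  show "cmod (symS K1 z1 z2 z3 / of_real ((menger z1 z2 z3)\<^sup>2) - 3/2) < \<epsilon> / (\<kappa> - \<epsilon>)
    \<and> cmod (symS K2 z1 z2 z3 / of_real ((menger z1 z2 z3)\<^sup>2) + 1/2) < \<epsilon> / (\<kappa> - \<epsilon>)"
    using norm_divide_sub_less [OF re m assms(2)] norm_divide_sub_less [OF im m assms(2)] by simp
qed

theorem corollary1p2:
  fixes J :: "real set" and A :: "real \<Rightarrow> real" and x0 :: real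
  assumes "open J" and "is_interval J"
    and "C3_on J A"
    and "x0 \<in> J"
    and "deriv (deriv A) x0 \<noteq> 0"
  defines "\<kappa>0 \<equiv> deriv (deriv A) x0 / (arclen_factor A x0) ^ 3"
  shows "\<exists>\<epsilon>0>0. \<forall>\<epsilon>. 0 < \<epsilon> \<and> \<epsilon> < \<epsilon>0 \<longrightarrow>
    (\<exists>\<delta>>0. {x0 - \<delta> <..< x0 + \<delta>} \<subseteq> J
      \<and> (\<forall>z1 \<in> graph_curve A {x0 - \<delta> <..< x0 + \<delta>}.
           \<forall>z2 \<in> graph_curve A {x0 - \<delta> <..< x0 + \<delta>}.
           \<forall>z3 \<in> graph_curve A {x0 - \<delta> <..< x0 + \<delta>}.
           z1 \<noteq> z2 \<and> z1 \<noteq> z3 \<and> z2 \<noteq> z3 \<longrightarrow>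
             \<bar>(menger z1 z2 z3)\<^sup>2 - \<kappa>0\<^sup>2\<bar> < \<epsilon>
           \<and> cmod (symS (ReK A) z1 z2 z3 - of_real (3/2 * (menger z1 z2 z3)\<^sup>2)) < \<epsilon>
           \<and> cmod (symS (ImK A) z1 z2 z3 + of_real (1/2 * (menger z1 z2 z3)\<^sup>2)) < \<epsilon>)
      \<and> (\<forall>z1 \<in> graph_curve A {x0 - \<delta> <..< x0 + \<delta>}.
           \<forall>z2 \<in> graph_curve A {x0 - \<delta> <..< x0 + \<delta>}.
           \<forall>z3 \<in> graph_curve A {x0 - \<delta> <..< x0 + \<delta>}.
           \<not> collinear {z1, z2, z3} \<longrightarrow>
             cmod (symS (ReK A) z1 z2 z3 / of_real ((menger z1 z2 z3)\<^sup>2) - 3/2)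
               < \<epsilon> / (\<kappa>0\<^sup>2 - \<epsilon>)
           \<and> cmod (symS (ImK A) z1 z2 z3 / of_real ((menger z1 z2 z3)\<^sup>2) + 1/2)
               < \<epsilon> / (\<kappa>0\<^sup>2 - \<epsilon>)))"
proof (rule exI [of _ "\<kappa>0\<^sup>2"], intro conjI allI impI, goal_cases)
  case 1
  show ?case using assms(5) arclen_factor_pos [of A x0] unfolding \<kappa>0_def by simp
next
  case (2 \<epsilon>)
  then obtain \<delta> where "0 < \<delta>" "{x0 - \<delta> <..< x0 + \<delta>} \<subseteq> J" and local:
    "\<forall>z1 \<in> graph_curve A {x0 - \<delta> <..< x0 + \<delta>}. \<forall>z2 \<in> graph_curve A {x0 - \<delta> <..< x0 + \<delta>}.
       \<forall>z3 \<in> graph_curve A {x0 - \<delta> <..< x0 + \<delta>}. z1 \<noteq> z2 \<and> z1 \<noteq> z3 \<and> z2 \<noteq> z3 \<longrightarrow>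
         \<bar>(menger z1 z2 z3)\<^sup>2 - \<kappa>0\<^sup>2\<bar> < \<epsilon>
       \<and> cmod (symS (ReK A) z1 z2 z3 - of_real (3/2 * (menger z1 z2 z3)\<^sup>2)) < \<epsilon>
       \<and> cmod (symS (ImK A) z1 z2 z3 + of_real (1/2 * (menger z1 z2 z3)\<^sup>2)) < \<epsilon>"
    using graph_local_estimates [OF assms(1,3,4), of \<epsilon>, folded \<kappa>0_def] by (elim exE conjE) auto
  then show ?case
    using \<open>0 < \<delta>\<close> \<open>{x0 - \<delta> <..< x0 + \<delta>} \<subseteq> J\<close> ratio_estimates [OF local] 2 by blast
qed

end
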